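(* The matched pair Lie algebra $\mathfrak{g}\bowtie\mathfrak{h}$ of the 2-cocycle extensions $\mathfrak{g}=V {_\varphi\rtimes}\, \mathfrak{l}$ and $\mathfrak{h}=W {_\phi\rtimes}\, \mathfrak{k}$ is itself a 2-cocycle extension, with respect to the left action $\cdot\!\!\triangleright$ of $\mathfrak{l}\bowtie\mathfrak{k}$ on $V\oplus W$ and the 2-cocycle $\Theta$ defined below; that is, \begin{equation*} (V {_\varphi\rtimes} \,\mathfrak{l}) \bowtie (W {_\phi\rtimes} \, \mathfrak{k}) \cong (V\oplus W) {_\Theta\rtimes} \, (\mathfrak{l} \bowtie \mathfrak{k}). \end{equation*}
   Context: Conventions. If $\mathfrak{h}$ is a Lie algebra acting from the left on a vector space $\mathfrak{g}$ by $\vartriangleright$ and $\Phi:\mathfrak{h}\times\mathfrak{h}\to\mathfrak{g}$ is a $\mathfrak{g}$-valued 2-cocycle, the 2-cocycle extension $\mathfrak{g}{_\Phi\rtimes}\mathfrak{h}$ is $\mathfrak{g}\oplus\mathfrak{h}$ with bracket $[\xi\oplus\eta,\xi'\oplus\eta']=(\eta\vartriangleright\xi'-\eta'\vartriangleright\xi+\Phi(\eta,\eta'))\oplus[\eta,\eta']$. If $\mathfrak{g},\mathfrak{h}$ are Lie algebras with a left action $\vartriangleright$ of $\mathfrak{h}$ on $\mathfrak{g}$ and a right action $\vartriangleleft$ of $\mathfrak{g}$ on $\mathfrak{h}$ satisfying the matched pair compatibility conditions, the matched pair $\mathfrak{g}\bowtie\mathfrak{h}$ is $\mathfrak{g}\oplus\mathfrak{h}$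 with bracket $[\xi\oplus\eta,\xi'\oplus\eta']=([\xi,\xi']+\eta\vartriangleright\xi'-\eta'\vartriangleright\xi)\oplus([\eta,\eta']+\eta\vartriangleleft\xi'-\eta'\vartriangleleft\xi)$. Setting. Let $\mathfrak{l},\mathfrak{k}$ be Lie algebras and $V,W$ vector spaces. Let $\varphi:\mathfrak{l}\times\mathfrak{l}\to V$ and $\phi:\mathfrak{k}\times\mathfrak{k}\to W$ be 2-cocycles with respect to left actions $\downharpoonleft:\mathfrak{l}\otimes V\to V$ and $\downharpoonright:\mathfrak{k}\otimes W\to W$, giving the 2-cocycle extensions $\mathfrak{g}=V{_\varphi\rtimes}\mathfrak{l}$ with bracket $[v\oplus l,v'\oplus l']=(l\downharpoonleft v'-l'\downharpoonleft v+\varphi(l,l'))\oplus[l,l']$ and $\mathfrak{h}=W{_\phi\rtimes}\mathfrak{k}$ with bracket $[w\oplus k,w'\oplus k']=(k\downharpoonright w'-k'\downharpoonright w+\phi(k,k'))\oplus[k,k']$. Let $\blacktriangleright:\mathfrak{k}\otimes\mathfrak{l}\to\mathfrak{l}$ and $\blacktriangleleft:\mathfrak{k}\otimes\mathfrak{l}\to\mathfrak{k}$ be mutual actions making $\mathfrak{l}\bowtie\mathfrak{k}$ a matched pair Lie algebra. Let $\curvearrowright:\mathfrak{k}\otimes V\to V$ be a left action and $\curvearrowleft:W\otimes\mathfrak{l}\to W$ a right action, and let $\epsilon:\mathfrak{k}\otimes\mathfrak{l}\to V$, $\iota:\mathfrak{k}\otimes\mathfrak{l}\to W$ be bilinear maps.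 Define mutual actions of $\mathfrak{h}$ and $\mathfrak{g}$ by $(w\oplus k)\vartriangleright(v\oplus l)=(k\curvearrowright v+\epsilon(k,l))\oplus(k\blacktriangleright l)$ and $(w\oplus k)\vartriangleleft(v\oplus l)=(w\curvearrowleft l+\iota(k,l))\oplus(k\blacktriangleleft l)$, and assume they satisfy the matched pair compatibility conditions, so that $\mathfrak{g}\bowtie\mathfrak{h}$ is a matched pair Lie algebra. Define $\cdot\!\!\triangleright:(\mathfrak{l}\bowtie\mathfrak{k})\times(V\oplus W)\to V\oplus W$ by $(l\oplus k)\cdot\!\!\triangleright(v\oplus w)=(l\downharpoonleft v+k\curvearrowright v)\oplus(-w\curvearrowleft l+k\downharpoonright w)$, assumed to be a left action, and $\Theta:(\mathfrak{l}\bowtie\mathfrak{k})\times(\mathfrak{l}\bowtie\mathfrak{k})\to V\oplus W$ by $\Theta((l\oplus k),(l'\oplus k'))=(\varphi(l,l')+\epsilon(k,l')-\epsilon(k',l))\oplus(\phi(k,k')+\iota(k,l')-\iota(k',l))$, assumed to satisfy the 2-cocycle condition with respect to $\cdot\!\!\triangleright$. *)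

theory Defs
  imports Complex_Main "HOL-Library.Product_Plus"
begin

text \<open>Direct sums are product types with componentwise scaling.\<close>

definition prod_scale ::
  "('f \<Rightarrow> 'a \<Rightarrow> 'a) \<Rightarrow> ('f \<Rightarrow> 'b \<Rightarrow> 'b) \<Rightarrow> 'f \<Rightarrow> 'a \<times> 'b \<Rightarrow> 'a \<times> 'b" where
  "prod_scale s1 s2 = (\<lambda>c p. (s1 c (fst p), s2 c (snd p)))"

definition bilinear_map ::
  "('f::field \<Rightarrow> 'a::ab_group_add \<Rightarrow> 'a) \<Rightarrow> ('f \<Rightarrow> 'b::ab_group_add \<Rightarrow> 'b)
   \<Rightarrow> ('f \<Rightarrow> 'c::ab_group_add \<Rightarrow> 'c) \<Rightarrow> ('a \<Rightarrow> 'b \<Rightarrow> 'c) \<Rightarrow> bool" where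
  "bilinear_map sa sb sc B \<longleftrightarrow>
     (\<forall>x. Vector_Spaces.linear sb sc (B x)) \<and> (\<forall>y. Vector_Spaces.linear sa sc (\<lambda>x. B x y))"

definition lie_algebra ::
  "('f::field \<Rightarrow> 'a::ab_group_add \<Rightarrow> 'a) \<Rightarrow> ('a \<Rightarrow> 'a \<Rightarrow> 'a) \<Rightarrow> bool" where
  "lie_algebra s br \<longleftrightarrow> vector_space s \<and> bilinear_map s s s br \<and> (\<forall>x. br x x = 0) \<and>
     (\<forall>x y z. br x (br y z) + br y (br z x) + br z (br x y) = 0)"

definition lie_left_action ::
  "('f::field \<Rightarrow> 'h::ab_group_add \<Rightarrow> 'h) \<Rightarrow> ('h \<Rightarrow> 'h \<Rightarrow> 'h)
   \<Rightarrow> ('f \<Rightarrow> 'g::ab_group_add \<Rightarrow> 'g) \<Rightarrow> ('h \<Rightarrow> 'g \<Rightarrow> 'g) \<Rightarrow> bool" where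
  "lie_left_action sh br sg act \<longleftrightarrow> bilinear_map sh sg sg act \<and>
     (\<forall>x y v. act (br x y) v = act x (act y v) - act y (act x v))"

definition lie_right_action ::
  "('f::field \<Rightarrow> 'g::ab_group_add \<Rightarrow> 'g) \<Rightarrow> ('g \<Rightarrow> 'g \<Rightarrow> 'g)
   \<Rightarrow> ('f \<Rightarrow> 'w::ab_group_add \<Rightarrow> 'w) \<Rightarrow> ('w \<Rightarrow> 'g \<Rightarrow> 'w) \<Rightarrow> bool" where
  "lie_right_action sg br sw ract \<longleftrightarrow> bilinear_map sw sg sw ract \<and>
     (\<forall>x y w. ract w (br x y) = ract (ract w x) y - ract (ract w y) x)"

definition two_cocycle ::
  "('f::field \<Rightarrow> 'h::ab_group_add \<Rightarrow> 'h) \<Rightarrow> ('h \<Rightarrow> 'h \<Rightarrow> 'h)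
   \<Rightarrow> ('f \<Rightarrow> 'g::ab_group_add \<Rightarrow> 'g) \<Rightarrow> ('h \<Rightarrow> 'g \<Rightarrow> 'g) \<Rightarrow> ('h \<Rightarrow> 'h \<Rightarrow> 'g) \<Rightarrow> bool" where
  "two_cocycle sh br sg act \<Phi> \<longleftrightarrow> bilinear_map sh sh sg \<Phi> \<and> (\<forall>x. \<Phi> x x = 0) \<and>
     (\<forall>x y z. act x (\<Phi> y z) + act y (\<Phi> z x) + act z (\<Phi> x y)
              - \<Phi> (br x y) z - \<Phi> (br y z) x - \<Phi> (br z x) y = 0)"

definition cext_bracket ::
  "('h \<Rightarrow> 'h \<Rightarrow> 'h) \<Rightarrow> ('h \<Rightarrow> 'g::ab_group_add \<Rightarrow> 'g) \<Rightarrow> ('h \<Rightarrow> 'h \<Rightarrow> 'g)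
   \<Rightarrow> 'g \<times> 'h \<Rightarrow> 'g \<times> 'h \<Rightarrow> 'g \<times> 'h" where
  "cext_bracket br act \<Phi> = (\<lambda>(\<xi>, \<eta>) (\<xi>', \<eta>').
     (act \<eta> \<xi>' - act \<eta>' \<xi> + \<Phi> \<eta> \<eta>', br \<eta> \<eta>'))"

text \<open>Bracket of the matched pair g \<bowtie> h on g \<oplus> h; lact \<eta> \<xi> = \<eta> \<triangleright> \<xi>, ract \<eta> \<xi> = \<eta> \<triangleleft> \<xi>.\<close>
definition mp_bracket ::
  "('g::ab_group_add \<Rightarrow> 'g \<Rightarrow> 'g) \<Rightarrow> ('h::ab_group_add \<Rightarrow> 'h \<Rightarrow> 'h)
   \<Rightarrow> ('h \<Rightarrow> 'g \<Rightarrow> 'g) \<Rightarrow> ('h \<Rightarrow> 'g \<Rightarrow> 'h) \<Rightarrow> 'g \<times> 'h \<Rightarrow> 'g \<times> 'h \<Rightarrow> 'g \<times> 'h" where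
  "mp_bracket brg brh lact ract = (\<lambda>(\<xi>, \<eta>) (\<xi>', \<eta>').
     (brg \<xi> \<xi>' + lact \<eta> \<xi>' - lact \<eta>' \<xi>, brh \<eta> \<eta>' + ract \<eta> \<xi>' - ract \<eta>' \<xi>))"

definition matched_pair ::
  "('f::field \<Rightarrow> 'g::ab_group_add \<Rightarrow> 'g) \<Rightarrow> ('g \<Rightarrow> 'g \<Rightarrow> 'g)
   \<Rightarrow> ('f \<Rightarrow> 'h::ab_group_add \<Rightarrow> 'h) \<Rightarrow> ('h \<Rightarrow> 'h \<Rightarrow> 'h)
   \<Rightarrow> ('h \<Rightarrow> 'g \<Rightarrow> 'g) \<Rightarrow> ('h \<Rightarrow> 'g \<Rightarrow> 'h) \<Rightarrow> bool" where
  "matched_pair sg brg sh brh lact ract \<longleftrightarrow>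
     lie_algebra sg brg \<and> lie_algebra sh brh \<and>
     lie_left_action sh brh sg lact \<and> lie_right_action sg brg sh ract \<and>
     (\<forall>\<eta> \<xi> \<xi>'. lact \<eta> (brg \<xi> \<xi>') =
        brg (lact \<eta> \<xi>) \<xi>' + brg \<xi> (lact \<eta> \<xi>') + lact (ract \<eta> \<xi>) \<xi>' - lact (ract \<eta> \<xi>') \<xi>) \<and>
     (\<forall>\<eta> \<eta>' \<xi>. ract (brh \<eta> \<eta>') \<xi> =
        brh \<eta> (ract \<eta>' \<xi>) + brh (ract \<eta> \<xi>) \<eta>' + ract \<eta> (lact \<eta>' \<xi>) - ract \<eta>' (lact \<eta> \<xi>))"

definition lie_iso ::
  "('f::field \<Rightarrow> 'a::ab_group_add \<Rightarrow> 'a) \<Rightarrow> ('a \<Rightarrow> 'a \<Rightarrow> 'a)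
   \<Rightarrow> ('f \<Rightarrow> 'b::ab_group_add \<Rightarrow> 'b) \<Rightarrow> ('b \<Rightarrow> 'b \<Rightarrow> 'b) \<Rightarrow> ('a \<Rightarrow> 'b) \<Rightarrow> bool" where
  "lie_iso s1 br1 s2 br2 f \<longleftrightarrow> Vector_Spaces.linear s1 s2 f \<and> bij f \<and>
     (\<forall>x y. f (br1 x y) = br2 (f x) (f y))"

end

theory Submission
  imports Defs
begin

text \<open>The isomorphism is the reordering of summands
  \<open>(V \<oplus> l) \<oplus> (W \<oplus> k) \<cong> (V \<oplus> W) \<oplus> (l \<oplus> k)\<close>. Expanding both brackets, the terms of
  the matched pair bracket regroup exactly into those of the cocycle extension bracket:
  \<open>actL, crv, -crl, actK\<close> make up the action \<open>\<cdot>\<triangleright>\<close>, and \<open>\<varphi>, \<epsilon>, \<phi>, \<iota>\<close> make up \<open>\<Theta>\<close>.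
  So the bracket identity is a formal computation needing none of the Lie algebra,
  action or cocycle axioms; only the vector space structures enter, for linearity.\<close>

definition swap_middle :: "('a \<times> 'b) \<times> ('c \<times> 'd) \<Rightarrow> ('a \<times> 'c) \<times> ('b \<times> 'd)" where
  "swap_middle = (\<lambda>((a, b), (c, d)). ((a, c), (b, d)))"

lemma vector_space_prod_scale:
  assumes "vector_space s1" and "vector_space s2"
  shows "vector_space (prod_scale s1 s2)"
  using assms unfolding vector_space_def prod_scale_def
  by (auto simp: zero_prod_def plus_prod_def)

lemma bij_swap_middle: "bij swap_middle"
  by (rule bij_betwI'[where X = UNIV and Y = UNIV]) (auto simp: swap_middle_def split: prod.splits)

lemma linear_swap_middle:
  assumes "vector_space sa" "vector_space sb" "vector_space sc" "vector_space sd"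
  shows "Vector_Spaces.linear (prod_scale (prod_scale sa sb) (prod_scale sc sd))
           (prod_scale (prod_scale sa sc) (prod_scale sb sd)) swap_middle"
proof -
  have "vector_space (prod_scale (prod_scale sa sb) (prod_scale sc sd))"
    and "vector_space (prod_scale (prod_scale sa sc) (prod_scale sb sd))"
    using assms by (simp_all add: vector_space_prod_scale)
  moreover from this
  have "module (prod_scale (prod_scale sa sb) (prod_scale sc sd))"
    and "module (prod_scale (prod_scale sa sc) (prod_scale sb sd))"
    by (simp_all add: vector_space_def module_def)
  ultimately show ?thesis
    unfolding Vector_Spaces.linear_def module_hom_def module_hom_axioms_def
    by (auto simp: swap_middle_def prod_scale_def split: prod.splits)
qed

lemma swap_middle_mp_bracket_cext_bracket:
  fixes brl :: "'l::ab_group_add \<Rightarrow> 'l \<Rightarrow> 'l" and brk :: "'k::ab_group_add \<Rightarrow> 'k \<Rightarrow> 'k"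
    and actL :: "'l \<Rightarrow> 'v::ab_group_add \<Rightarrow> 'v" and actK :: "'k \<Rightarrow> 'w::ab_group_add \<Rightarrow> 'w"
  shows "swap_middle
      (mp_bracket (cext_bracket brl actL varphi) (cext_bracket brk actK phi)
         (\<lambda>(w, k) (v, l). (crv k v + eps k l, btr k l))
         (\<lambda>(w, k) (v, l). (crl w l + iota k l, btl k l)) x y)
    = cext_bracket (mp_bracket brl brk btr btl)
         (\<lambda>(l, k) (v, w). (actL l v + crv k v, - crl w l + actK k w))
         (\<lambda>(l, k) (l', k'). (varphi l l' + eps k l' - eps k' l, phi k k' + iota k l' - iota k' l))
         (swap_middle x) (swap_middle y)"
  by (auto simp: swap_middle_def mp_bracket_def cext_bracket_def split: prod.splits)

theorem proposition6p1:
  fixes sV :: "'f::field \<Rightarrow> 'v::ab_group_add \<Rightarrow> 'v"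
    and sW :: "'f \<Rightarrow> 'w::ab_group_add \<Rightarrow> 'w"
    and sl :: "'f \<Rightarrow> 'l::ab_group_add \<Rightarrow> 'l"
    and sk :: "'f \<Rightarrow> 'k::ab_group_add \<Rightarrow> 'k"
    and brl :: "'l \<Rightarrow> 'l \<Rightarrow> 'l" and brk :: "'k \<Rightarrow> 'k \<Rightarrow> 'k"
    and actL :: "'l \<Rightarrow> 'v \<Rightarrow> 'v" and actK :: "'k \<Rightarrow> 'w \<Rightarrow> 'w"
    and varphi :: "'l \<Rightarrow> 'l \<Rightarrow> 'v" and phi :: "'k \<Rightarrow> 'k \<Rightarrow> 'w"
    and btr :: "'k \<Rightarrow> 'l \<Rightarrow> 'l" and btl :: "'k \<Rightarrow> 'l \<Rightarrow> 'k"
    and crv :: "'k \<Rightarrow> 'v \<Rightarrow> 'v" and crl :: "'w \<Rightarrow> 'l \<Rightarrow> 'w"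
    and eps :: "'k \<Rightarrow> 'l \<Rightarrow> 'v" and iota :: "'k \<Rightarrow> 'l \<Rightarrow> 'w"
  assumes "lie_algebra sl brl" and "lie_algebra sk brk"
    and "vector_space sV" and "vector_space sW"
    and "lie_left_action sl brl sV actL" and "lie_left_action sk brk sW actK"
    and "two_cocycle sl brl sV actL varphi" and "two_cocycle sk brk sW actK phi"
    and "matched_pair sl brl sk brk btr btl"
    and "lie_left_action sk brk sV crv" and "lie_right_action sl brl sW crl"
    and "bilinear_map sk sl sV eps" and "bilinear_map sk sl sW iota"
    and "matched_pair (prod_scale sV sl) (cext_bracket brl actL varphi)
           (prod_scale sW sk) (cext_bracket brk actK phi)
           (\<lambda>(w, k) (v, l). (crv k v + eps k l, btr k l))
           (\<lambda>(w, k) (v, l). (crl w l + iota k l, btl k l))"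
    and "lie_left_action (prod_scale sl sk) (mp_bracket brl brk btr btl) (prod_scale sV sW)
           (\<lambda>(l, k) (v, w). (actL l v + crv k v, - crl w l + actK k w))"
    and "two_cocycle (prod_scale sl sk) (mp_bracket brl brk btr btl) (prod_scale sV sW)
           (\<lambda>(l, k) (v, w). (actL l v + crv k v, - crl w l + actK k w))
           (\<lambda>(l, k) (l', k'). (varphi l l' + eps k l' - eps k' l, phi k k' + iota k l' - iota k' l))"
  shows "\<exists>f. lie_iso (prod_scale (prod_scale sV sl) (prod_scale sW sk))
              (mp_bracket (cext_bracket brl actL varphi) (cext_bracket brk actK phi)
                 (\<lambda>(w, k) (v, l). (crv k v + eps k l, btr k l))
                 (\<lambda>(w, k) (v, l). (crl w l + iota k l, btl k l)))
              (prod_scale (prod_scale sV sW) (prod_scale sl sk))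
              (cext_bracket (mp_bracket brl brk btr btl)
                 (\<lambda>(l, k) (v, w). (actL l v + crv k v, - crl w l + actK k w))
                 (\<lambda>(l, k) (l', k'). (varphi l l' + eps k l' - eps k' l, phi k k' + iota k l' - iota k' l)))
              f"
proof -
  have "vector_space sl" and "vector_space sk"
    using assms(1,2) by (simp_all add: lie_algebra_def)
  with assms(3,4) have "Vector_Spaces.linear (prod_scale (prod_scale sV sl) (prod_scale sW sk))
      (prod_scale (prod_scale sV sW) (prod_scale sl sk)) swap_middle"
    by (simp add: linear_swap_middle)
  then show ?thesis
    unfolding lie_iso_def
    using bij_swap_middle swap_middle_mp_bracket_cext_bracket by blast
qed

end
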